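(* For every positive integer $x$, the $T$-orbit $x,T(x),T^2(x),\dots$ contains an integer congruent to $2\pmod 9$.
   Context: $T(z)=z/2$ for $z$ even and $T(z)=(3z+1)/2$ for $z$ odd. *)

theory Defs
  imports Main
begin

definition T :: "int \<Rightarrow> int" where
  "T z = (if even z then z div 2 else (3 * z + 1) div 2)"

end

theory Submission
  imports Defs
begin

text \<open>
  Track the T-orbit modulo 9: an even step acts on residues as r \<mapsto> 5r and
  an odd step as r \<mapsto> 6r + 5 (both mod 9), because 2 is invertible modulo 9 with inverse 5.
  Every odd step lands in {2, 5, 8}, and from 5 the orbit reaches 2 or 8 within two
  more steps.  Residue 8 is a trap for orbits avoiding 2: an odd step keeps it at 8, while
  an even step gives 4 and then 2.  So an orbit that never hits 2 is odd from some point on.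
  That contradicts two growth facts for positive integers: an even step halves, so odd terms
  occur; a run of k odd steps satisfies 2^k (T^k z + 1) = 3^k (z + 1), so the run is shorter
  than z + 1 and even terms occur.
\<close>

lemma T_mod_9:
  "T z mod 9 = (if even z then 5 * (z mod 9) else 6 * (z mod 9) + 5) mod 9"
proof (cases "even z")
  case True
  then obtain m where z: "z = 2 * m" by blast
  have "T z = m" using z by (simp add: T_def)
  then have "T z mod 9 = (m + 9 * m) mod 9" by (simp only: mod_mult_self2)
  also have "\<dots> = (5 * z) mod 9" using z by simp
  also have "\<dots> = (5 * (z mod 9)) mod 9" by (simp add: mod_mult_right_eq)
  finally show ?thesis using True by simp
next
  case False
  then obtain m where z: "z = 2 * m + 1" by (blast elim: oddE)
  have "T z = 3 * m + 2" using z by (simp add: T_def)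
  then have "T z mod 9 = ((3 * m + 2) + 9 * (m + 1)) mod 9" by (simp only: mod_mult_self2)
  also have "\<dots> = (6 * z + 5) mod 9" using z by (simp add: algebra_simps)
  also have "\<dots> = (6 * (z mod 9) + 5) mod 9" by (metis mod_add_left_eq mod_mult_right_eq)
  finally show ?thesis using False by simp
qed

lemma mod_9_cases:
  fixes z :: int
  obtains "z mod 9 = 0" | "z mod 9 = 1" | "z mod 9 = 2" | "z mod 9 = 3" | "z mod 9 = 4"
    | "z mod 9 = 5" | "z mod 9 = 6" | "z mod 9 = 7" | "z mod 9 = 8"
proof -
  have "0 \<le> z mod 9" "z mod 9 < 9" by simp_all
  then show thesis using that by linarith
qed

lemma T_odd_mod_9: "odd z \<Longrightarrow> T z mod 9 \<in> {2, 5, 8}"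
  by (cases z rule: mod_9_cases) (simp_all add: T_mod_9)

lemma T_mod_9_from_5: "z mod 9 = 5 \<Longrightarrow> T z mod 9 \<in> {7, 8}"
  by (simp add: T_mod_9)

lemma T_mod_9_from_7: "z mod 9 = 7 \<Longrightarrow> T z mod 9 \<in> {2, 8}"
  by (simp add: T_mod_9)

lemma odd_reaches_2_or_8:
  assumes "odd z"
  shows "\<exists>j. (T ^^ j) z mod 9 \<in> {2, 8}"
proof -
  consider "T z mod 9 \<in> {2, 8}" | "T z mod 9 = 5" using T_odd_mod_9[OF assms] by blast
  then show ?thesis
  proof cases
    case 1
    then show ?thesis by (metis funpow_0 funpow_Suc_right o_apply)
  next
    case 2
    then consider "T (T z) mod 9 = 8" | "T (T z) mod 9 = 7" using T_mod_9_from_5 by blast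
    then show ?thesis
    proof cases
      case 1
      then have "(T ^^ 2) z mod 9 = 8" by (simp add: numeral_2_eq_2)
      then show ?thesis by blast
    next
      case 2
      then have "(T ^^ 3) z mod 9 \<in> {2, 8}"
        using T_mod_9_from_7 by (simp add: numeral_3_eq_3)
      then show ?thesis by blast
    qed
  qed
qed

text \<open>Residue 8 is a trap: unless the orbit hits 2 two steps later, the step is odd and
  stays at 8 (an even step goes 8 \<mapsto> 4 \<mapsto> 2).\<close>
lemma mod_9_eq_8_trap:
  assumes "z mod 9 = 8" and "T (T z) mod 9 \<noteq> 2"
  shows "odd z \<and> T z mod 9 = 8"
proof (cases "even z")
  case True
  then have "T z mod 9 = 4" using assms(1) by (simp add: T_mod_9)
  then have "T (T z) mod 9 = 2" by (simp add: T_mod_9)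
  with assms(2) show ?thesis by simp
qed (use assms(1) in \<open>simp add: T_mod_9\<close>)

lemma orbit_trapped_at_8:
  assumes "z mod 9 = 8" and no2: "\<forall>k. (T ^^ k) z mod 9 \<noteq> 2"
  shows "odd ((T ^^ k) z)"
proof -
  have "(T ^^ k) z mod 9 = 8" for k
  proof (induction k)
    case (Suc k)
    have "T (T ((T ^^ k) z)) mod 9 \<noteq> 2" using no2 by (metis funpow.simps(2) o_apply)
    then show ?case using mod_9_eq_8_trap[OF Suc.IH] by simp
  qed (use assms(1) in simp)
  moreover have "T (T ((T ^^ k) z)) mod 9 \<noteq> 2" using no2 by (metis funpow.simps(2) o_apply)
  ultimately show ?thesis using mod_9_eq_8_trap by blast
qed

lemma T_pos: "z > 0 \<Longrightarrow> T z > 0"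
  unfolding T_def by (cases "even z") (auto elim!: evenE oddE)

lemma T_odd_succ:
  assumes "odd z"
  shows "2 * (T z + 1) = 3 * (z + 1)"
proof -
  obtain m where z: "z = 2 * m + 1" using assms by (blast elim: oddE)
  then have "T z = 3 * m + 2" by (simp add: T_def)
  then show ?thesis using z by simp
qed

text \<open>Positive orbits contain an odd term: each even step strictly decreases the value.\<close>
lemma orbit_has_odd:
  fixes x :: int
  assumes "x > 0"
  shows "\<exists>k. odd ((T ^^ k) x)"
  using assms
proof (induction "nat x" arbitrary: x rule: less_induct)
  case less
  show ?case
  proof (cases "odd x")
    case True
    then show ?thesis by (metis funpow_0)
  next
    case False
    then have "T x > 0" "T x < x" using less.prems by (auto simp: T_def elim!: evenE)
    then obtain k where "odd ((T ^^ k) (T x))" using less.hyps by fastforce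
    then show ?thesis by (metis funpow_Suc_right o_apply)
  qed
qed

lemma odd_run_identity:
  assumes "\<forall>i<k. odd ((T ^^ i) z)"
  shows "2 ^ k * ((T ^^ k) z + 1) = 3 ^ k * (z + 1)"
  using assms
proof (induction k)
  case (Suc k)
  have "2 ^ Suc k * ((T ^^ Suc k) z + 1) = 2 ^ k * (2 * (T ((T ^^ k) z) + 1))" by simp
  also have "\<dots> = 3 * (2 ^ k * ((T ^^ k) z + 1))"
    using T_odd_succ[of "(T ^^ k) z"] Suc.prems by simp
  also have "\<dots> = 3 ^ Suc k * (z + 1)" using Suc by simp
  finally show ?case .
qed simp

text \<open>Positive orbits contain an even term: 2^k divides z + 1 after k odd steps,
  so an odd run is shorter than z + 1.\<close>
lemma orbit_has_even:
  fixes z :: int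
  assumes "z > 0"
  shows "\<exists>k. even ((T ^^ k) z)"
proof (rule ccontr)
  assume all_odd: "\<nexists>k. even ((T ^^ k) z)"
  define k where "k = nat (z + 1)"
  have "(2::int) ^ k dvd 3 ^ k * (z + 1)"
    using odd_run_identity[of k z] all_odd by (metis dvd_triv_left)
  then have "(2::int) ^ k dvd z + 1"
    by (simp add: coprime_dvd_mult_right_iff)
  then have "(2::int) ^ k \<le> z + 1" using assms by (simp add: zdvd_imp_le)
  moreover have "int k < 2 ^ k" by (metis less_exp of_nat_less_iff of_nat_numeral of_nat_power)
  ultimately show False using assms k_def by simp
qed

theorem mainTheorem12:
  fixes x :: int
  assumes "x > 0"
  shows "\<exists>k::nat. (T ^^ k) x mod 9 = 2"
proof (rule ccontr)
  assume "\<not> ?thesis"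
  then have no2: "\<forall>k. (T ^^ k) x mod 9 \<noteq> 2" by simp
  have orbit_pos: "(T ^^ k) x > 0" for k by (induction k) (simp_all add: assms T_pos)
  obtain k where "odd ((T ^^ k) x)" using orbit_has_odd[OF assms] by blast
  then obtain j where "(T ^^ j) ((T ^^ k) x) mod 9 \<in> {2, 8}"
    using odd_reaches_2_or_8 by blast
  moreover define y where "y = (T ^^ (j + k)) x"
  moreover have shift: "(T ^^ i) y = (T ^^ (i + (j + k))) x" for i
    by (simp add: y_def funpow_add)
  ultimately have "y mod 9 = 8" using no2[rule_format, of "j + k"] by (simp add: funpow_add)
  moreover have "\<forall>i. (T ^^ i) y mod 9 \<noteq> 2" using no2 shift by simp
  ultimately have "odd ((T ^^ i) y)" for i using orbit_trapped_at_8 by blast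
  then show False using orbit_has_even[OF orbit_pos[of "j + k"]] y_def by blast
qed

end
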